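(* Let $X=\{X(t):t\in[0,1]\}$ be a second-order stochastic process with continuous trajectories and continuous mean and covariance functions, the covariance function $K$ being positive definite. Let $(\alpha_j)$ be a sequence of positive real numbers with $\alpha_j\to\alpha>0$ as $j\to\infty$. Then $\|X_{\alpha_j}\|_K\to\|X_\alpha\|_K$ almost surely as $j\to\infty$.
   Context: $\mathcal{H}(K)$ is the RKHS of $K$: the completion of the finite linear combinations $\sum_i a_iK(t_i,\cdot)$ under $\langle\sum_i a_iK(t_i,\cdot),\sum_j b_jK(s_j,\cdot)\rangle_K=\sum_{i,j}a_ib_jK(t_i,s_j)$ (elements are pointwise limits of Cauchy sequences), norm $\|\cdot\|_K$. For $x\in L^2[0,1]$ and $\beta>0$, $x_\beta=\operatorname{argmin}_{f\in\mathcal{H}(K)}\|x-f\|_2^2+\beta\|f\|_K^2$ ($\|\cdot\|_2$ the $L^2[0,1]$ norm); $X_\beta$ denotes this applied to the trajectory of $X$. *)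

theory Defs
  imports "HOL-Probability.Probability"
begin

text \<open>Finite linear combinations sum_i a_i K(t_i, .) with t_i in [0,1] are
represented as lists of pairs (a_i, t_i).\<close>

type_synonym combo = "(real \<times> real) list"

definition combo_fun :: "(real \<Rightarrow> real \<Rightarrow> real) \<Rightarrow> combo \<Rightarrow> real \<Rightarrow> real" where
  "combo_fun K c t = (\<Sum>(a, s)\<leftarrow>c. a * K s t)"

definition kinner :: "(real \<Rightarrow> real \<Rightarrow> real) \<Rightarrow> combo \<Rightarrow> combo \<Rightarrow> real" where
  "kinner K c d = (\<Sum>(a, s)\<leftarrow>c. \<Sum>(b, r)\<leftarrow>d. a * b * K s r)"

definition knorm :: "(real \<Rightarrow> real \<Rightarrow> real) \<Rightarrow> combo \<Rightarrow> real" where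
  "knorm K c = sqrt (kinner K c c)"

definition combo_diff :: "combo \<Rightarrow> combo \<Rightarrow> combo" where
  "combo_diff c d = c @ map (\<lambda>(b, r). (- b, r)) d"

definition valid_combo :: "combo \<Rightarrow> bool" where
  "valid_combo c \<longleftrightarrow> (\<forall>(a, s)\<in>set c. s \<in> {0..1})"

definition rkhs_approx :: "(real \<Rightarrow> real \<Rightarrow> real) \<Rightarrow> (nat \<Rightarrow> combo) \<Rightarrow> (real \<Rightarrow> real) \<Rightarrow> bool" where
  "rkhs_approx K c f \<longleftrightarrow>
     (\<forall>n. valid_combo (c n)) \<and>
     (\<forall>e>0. \<exists>N. \<forall>m\<ge>N. \<forall>n\<ge>N. knorm K (combo_diff (c m) (c n)) < e) \<and>
     (\<forall>t\<in>{0..1}. (\<lambda>n. combo_fun K (c n) t) \<longlonglongrightarrow> f t)"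

text \<open>The RKHS H(K): functions on [0,1] (extended by 0 outside [0,1]) that are
pointwise limits of K-Cauchy sequences of finite combinations.\<close>
definition rkhs :: "(real \<Rightarrow> real \<Rightarrow> real) \<Rightarrow> (real \<Rightarrow> real) set" where
  "rkhs K = {f. (\<forall>t. t \<notin> {0..1} \<longrightarrow> f t = 0) \<and> (\<exists>c. rkhs_approx K c f)}"

definition rkhs_norm :: "(real \<Rightarrow> real \<Rightarrow> real) \<Rightarrow> (real \<Rightarrow> real) \<Rightarrow> real" where
  "rkhs_norm K f = (THE r. \<forall>c. rkhs_approx K c f \<longrightarrow> (\<lambda>n. knorm K (c n)) \<longlonglongrightarrow> r)"

definition L2_dist_sq :: "(real \<Rightarrow> real) \<Rightarrow> (real \<Rightarrow> real) \<Rightarrow> real" where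
  "L2_dist_sq x f = (LINT t:{0..1}|lborel. (x t - f t)\<^sup>2)"

definition reg_fit :: "(real \<Rightarrow> real \<Rightarrow> real) \<Rightarrow> (real \<Rightarrow> real) \<Rightarrow> real \<Rightarrow> (real \<Rightarrow> real)" where
  "reg_fit K x \<beta> = (THE f. f \<in> rkhs K \<and>
     (\<forall>g\<in>rkhs K. L2_dist_sq x f + \<beta> * (rkhs_norm K f)\<^sup>2 \<le> L2_dist_sq x g + \<beta> * (rkhs_norm K g)\<^sup>2))"

definition pos_def_kernel :: "(real \<Rightarrow> real \<Rightarrow> real) \<Rightarrow> bool" where
  "pos_def_kernel K \<longleftrightarrow>
    (\<forall>ts a :: real list. distinct ts \<and> set ts \<subseteq> {0..1} \<and> length a = length ts \<and> (\<exists>x\<in>set a. x \<noteq> 0)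
       \<longrightarrow> (\<Sum>i<length ts. \<Sum>j<length ts. a!i * a!j * K (ts!i) (ts!j)) > 0)"

end

theory Submission
  imports Defs
begin

(* Finite combinations of kernel sections carry the semi-inner product
   kinner K, and H(K) consists of pointwise limits of kinner-Cauchy sequences of them;
   evaluation at t is bounded by sqrt (K t t) times the norm.  The objective
   J_beta(f) = ||x - f||_2^2 + beta ||f||_K^2 is strongly convex: at the midpoint of two
   combinations c, d it lies beta ||c - d||_K^2 / 4 below their average.  Hence
   near-minimizing sequences are Cauchy (so x_beta exists), minimizers coincide, and
   (||x_alpha||_K - ||g||_K)^2 <= (2 / alpha) (J_alpha(g) - J_alpha(x_alpha)) for every g.
   For g = x_gamma, comparing J_alpha with J_gamma bounds the right-hand side by
   (2 / alpha) |gamma - alpha| (||x_alpha||_K^2 + ||x_gamma||_K^2), and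
   gamma ||x_gamma||_K^2 <= ||x||_2^2; so ||x_gamma||_K -> ||x_alpha||_K as gamma -> alpha,
   for every continuous trajectory x.  The covariance kernel is positive semidefinite
   because kinner K c c is the second moment of a linear combination of the centred
   process. *)

section \<open>Finite kernel combinations\<close>

definition combo_scale :: "real \<Rightarrow> combo \<Rightarrow> combo" where
  "combo_scale r c = map (\<lambda>(a, s). (r * a, s)) c"

lemma combo_fun_Nil [simp]: "combo_fun K [] t = 0"
  by (simp add: combo_fun_def)

lemma combo_fun_Cons [simp]: "combo_fun K ((a, s) # c) t = a * K s t + combo_fun K c t"
  by (simp add: combo_fun_def)

lemma combo_fun_append: "combo_fun K (c @ d) t = combo_fun K c t + combo_fun K d t"
  by (simp add: combo_fun_def)

lemma combo_fun_scale: "combo_fun K (combo_scale r c) t = r * combo_fun K c t"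
  by (induct c) (auto simp: combo_scale_def algebra_simps)

lemma combo_diff_eq: "combo_diff c d = c @ combo_scale (-1) d"
  by (simp add: combo_diff_def combo_scale_def)

lemma combo_fun_combo_diff: "combo_fun K (combo_diff c d) t = combo_fun K c t - combo_fun K d t"
  by (simp add: combo_diff_eq combo_fun_append combo_fun_scale)

lemma kinner_eq_sum_combo_fun: "kinner K c d = (\<Sum>(b, r)\<leftarrow>d. b * combo_fun K c r)"
proof (induct d)
  case (Cons p d)
  then show ?case
    by (cases p) (simp add: kinner_def combo_fun_def sum_list_addf split_def
        sum_list_const_mult[symmetric] algebra_simps)
qed (induct c, simp_all add: kinner_def)

lemma kinner_Nil_left [simp]: "kinner K [] d = 0"
  by (simp add: kinner_def)

lemma combo_fun_eq_kinner: "combo_fun K c t = kinner K c [(1, t)]"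
  by (simp add: kinner_eq_sum_combo_fun)

lemma kinner_append_left: "kinner K (c @ d) e = kinner K c e + kinner K d e"
  by (simp add: kinner_def)

lemma kinner_append_right: "kinner K c (d @ e) = kinner K c d + kinner K c e"
  by (simp add: kinner_eq_sum_combo_fun)

lemma kinner_scale_left: "kinner K (combo_scale r c) d = r * kinner K c d"
  by (simp add: kinner_eq_sum_combo_fun combo_fun_scale split_def sum_list_const_mult[symmetric]
      algebra_simps)

lemma kinner_scale_right: "kinner K c (combo_scale r d) = r * kinner K c d"
  by (induct d) (auto simp: kinner_eq_sum_combo_fun combo_scale_def algebra_simps)

lemma kinner_commute:
  assumes "\<And>s t. K s t = K t s"
  shows "kinner K c d = kinner K d c"
  unfolding kinner_def using assms
  by (induct c) (simp_all add: split_def sum_list_addf mult.commute mult.left_commute)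

lemma valid_combo_Nil [simp]: "valid_combo []"
  by (simp add: valid_combo_def)

lemma valid_combo_Cons [simp]: "valid_combo ((a, s) # c) \<longleftrightarrow> s \<in> {0..1} \<and> valid_combo c"
  by (simp add: valid_combo_def)

lemma valid_combo_append [simp]: "valid_combo (c @ d) \<longleftrightarrow> valid_combo c \<and> valid_combo d"
  by (auto simp: valid_combo_def)

lemma valid_combo_scale [simp]: "valid_combo (combo_scale r c) \<longleftrightarrow> valid_combo c"
  by (auto simp: valid_combo_def combo_scale_def)

lemma valid_combo_diff [simp]: "valid_combo (combo_diff c d) \<longleftrightarrow> valid_combo c \<and> valid_combo d"
  by (simp add: combo_diff_eq)

lemma tendsto_sum_list:
  fixes f :: "'b \<Rightarrow> 'a \<Rightarrow> 'c :: topological_monoid_add"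
  assumes "\<And>x. x \<in> set xs \<Longrightarrow> ((\<lambda>n. f n x) \<longlongrightarrow> l x) F"
  shows "((\<lambda>n. \<Sum>x\<leftarrow>xs. f n x) \<longlongrightarrow> (\<Sum>x\<leftarrow>xs. l x)) F"
  using assms by (induct xs) (auto intro!: tendsto_add)

definition combo_Cauchy :: "(real \<Rightarrow> real \<Rightarrow> real) \<Rightarrow> (nat \<Rightarrow> combo) \<Rightarrow> bool" where
  "combo_Cauchy K c \<longleftrightarrow> (\<forall>e>0. \<exists>N. \<forall>m\<ge>N. \<forall>n\<ge>N. knorm K (combo_diff (c m) (c n)) < e)"

lemma rkhs_approx_iff:
  "rkhs_approx K c f \<longleftrightarrow> (\<forall>n. valid_combo (c n)) \<and> combo_Cauchy K c \<and>
     (\<forall>t\<in>{0..1}. (\<lambda>n. combo_fun K (c n) t) \<longlonglongrightarrow> f t)"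
  by (simp add: rkhs_approx_def combo_Cauchy_def)

definition combo_elem :: "(real \<Rightarrow> real \<Rightarrow> real) \<Rightarrow> combo \<Rightarrow> real \<Rightarrow> real" where
  "combo_elem K c t = (if t \<in> {0..1} then combo_fun K c t else 0)"

definition reg_obj :: "(real \<Rightarrow> real \<Rightarrow> real) \<Rightarrow> (real \<Rightarrow> real) \<Rightarrow> real \<Rightarrow> (real \<Rightarrow> real) \<Rightarrow> real"
  where "reg_obj K x \<beta> f = L2_dist_sq x f + \<beta> * (rkhs_norm K f)^2"

definition combo_midpoint :: "combo \<Rightarrow> combo \<Rightarrow> combo" where
  "combo_midpoint c d = combo_scale (1 / 2) (c @ d)"

lemma valid_combo_midpoint [simp]:
  "valid_combo (combo_midpoint c d) \<longleftrightarrow> valid_combo c \<and> valid_combo d"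
  by (simp add: combo_midpoint_def)

lemma combo_fun_midpoint:
  "combo_fun K (combo_midpoint c d) t = (combo_fun K c t + combo_fun K d t) / 2"
  by (simp add: combo_midpoint_def combo_fun_scale combo_fun_append)

lemma combo_elem_Nil [simp]: "combo_elem K [] = (\<lambda>t. 0)"
  by (simp add: combo_elem_def fun_eq_iff)

lemma L2_dist_sq_cong: "(\<And>t. t \<in> {0..1} \<Longrightarrow> f t = g t) \<Longrightarrow> L2_dist_sq x f = L2_dist_sq x g"
  unfolding L2_dist_sq_def by (rule set_lebesgue_integral_cong) auto

lemma L2_dist_sq_eq_integral:
  assumes "continuous_on {0..1} x" "continuous_on {0..1} g"
  shows "L2_dist_sq x g = integral {0..1} (\<lambda>t. (x t - g t)^2)"
proof -
  have "continuous_on {0..1} (\<lambda>t. (x t - g t)^2)"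
    using assms by (intro continuous_intros)
  then have "set_integrable lborel {0..1} (\<lambda>t. (x t - g t)^2)"
    by (rule borel_integrable_atLeastAtMost')
  then show ?thesis
    unfolding L2_dist_sq_def by (rule set_borel_integral_eq_integral(2))
qed

lemma L2_dist_sq_nonneg: "L2_dist_sq x g \<ge> 0"
  unfolding L2_dist_sq_def set_lebesgue_integral_def
  by (rule integral_nonneg_AE) (auto simp: indicator_def)

lemma reg_obj_nonneg: "\<beta> \<ge> 0 \<Longrightarrow> reg_obj K x \<beta> f \<ge> 0"
  unfolding reg_obj_def using L2_dist_sq_nonneg[of x f] by simp

section \<open>Continuous positive semidefinite kernels\<close>

locale continuous_psd_kernel =
  fixes K :: "real \<Rightarrow> real \<Rightarrow> real"
  assumes symmetric: "K s t = K t s"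
    and kinner_self_nonneg: "valid_combo c \<Longrightarrow> kinner K c c \<ge> 0"
    and continuous: "continuous_on ({0..1} \<times> {0..1}) (\<lambda>(s, t). K s t)"
begin

lemma kinner_sym: "kinner K c d = kinner K d c"
  by (rule kinner_commute[OF symmetric])

lemma kinner_Cauchy_Schwarz:
  assumes "valid_combo c" "valid_combo d"
  shows "(kinner K c d)^2 \<le> kinner K c c * kinner K d d"
proof -
  define A B C where "A = kinner K c c" and "B = kinner K c d" and "C = kinner K d d"
  have quadratic: "0 \<le> A + 2 * l * B + l^2 * C" for l
  proof -
    have "0 \<le> kinner K (c @ combo_scale l d) (c @ combo_scale l d)"
      using assms by (intro kinner_self_nonneg) simp
    then show ?thesis
      by (simp add: A_def B_def C_def kinner_append_left kinner_append_right kinner_scale_left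
          kinner_scale_right kinner_sym[of d c] power2_eq_square algebra_simps)
  qed
  have "C \<ge> 0"
    using assms by (simp add: C_def kinner_self_nonneg)
  show ?thesis
  proof (cases "C = 0")
    case True
    have "B = 0"
    proof (rule ccontr)
      assume "B \<noteq> 0"
      then show False
        using quadratic[of "- (A + 1) / (2 * B)"] True by (simp add: field_simps)
    qed
    then show ?thesis
      using True by (simp add: B_def C_def)
  next
    case False
    with \<open>C \<ge> 0\<close> have "C > 0" by simp
    have "0 \<le> A + 2 * (- B / C) * B + (- B / C)^2 * C"
      by (rule quadratic)
    with \<open>C > 0\<close> have "B^2 \<le> A * C"
      by (simp add: power2_eq_square field_simps)
    then show ?thesis
      by (simp add: A_def B_def C_def)
  qed
qed

lemma knorm_nonneg: "valid_combo c \<Longrightarrow> knorm K c \<ge> 0"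
  by (simp add: knorm_def kinner_self_nonneg)

lemma knorm_power2: "valid_combo c \<Longrightarrow> (knorm K c)^2 = kinner K c c"
  by (simp add: knorm_def kinner_self_nonneg)

lemma abs_kinner_le_knorm:
  assumes "valid_combo c" "valid_combo d"
  shows "\<bar>kinner K c d\<bar> \<le> knorm K c * knorm K d"
proof -
  have "sqrt ((kinner K c d)^2) \<le> sqrt (kinner K c c * kinner K d d)"
    using kinner_Cauchy_Schwarz[OF assms] by (rule real_sqrt_le_mono)
  then show ?thesis
    by (simp add: knorm_def real_sqrt_mult)
qed

lemma knorm_append_le:
  assumes "valid_combo c" "valid_combo d"
  shows "knorm K (c @ d) \<le> knorm K c + knorm K d"
proof -
  have "(knorm K (c @ d))^2 = (knorm K c)^2 + 2 * kinner K c d + (knorm K d)^2"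
    using assms by (simp add: knorm_power2 kinner_append_left kinner_append_right kinner_sym[of d c])
  also have "\<dots> \<le> (knorm K c)^2 + 2 * (knorm K c * knorm K d) + (knorm K d)^2"
    using abs_kinner_le_knorm[OF assms] abs_ge_self[of "kinner K c d"] by linarith
  also have "\<dots> = (knorm K c + knorm K d)^2"
    by (simp add: power2_eq_square algebra_simps)
  finally have "(knorm K (c @ d))^2 \<le> (knorm K c + knorm K d)^2" .
  then show ?thesis
    by (rule power2_le_imp_le) (simp add: assms knorm_nonneg)
qed

lemma knorm_eqI:
  assumes "\<And>e. kinner K c e = kinner K c' e"
  shows "knorm K c = knorm K c'"
  using assms[of c] assms[of c'] kinner_sym[of c c'] by (simp add: knorm_def)

lemma knorm_scale: "knorm K (combo_scale r c) = \<bar>r\<bar> * knorm K c"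
  by (simp add: knorm_def kinner_scale_left kinner_scale_right real_sqrt_mult
      mult.assoc[symmetric])

lemma knorm_combo_diff_commute: "knorm K (combo_diff c d) = knorm K (combo_diff d c)"
proof -
  have "knorm K (combo_diff c d) = knorm K (combo_scale (-1) (combo_diff d c))"
    by (rule knorm_eqI) (simp add: combo_diff_eq kinner_append_left kinner_scale_left)
  then show ?thesis
    by (simp add: knorm_scale)
qed

lemma knorm_le_combo_diff:
  assumes "valid_combo c" "valid_combo d"
  shows "knorm K c \<le> knorm K (combo_diff c d) + knorm K d"
proof -
  have "knorm K c = knorm K (combo_diff c d @ d)"
    by (rule knorm_eqI) (simp add: combo_diff_eq kinner_append_left kinner_scale_left)
  also have "\<dots> \<le> knorm K (combo_diff c d) + knorm K d"
    using assms by (intro knorm_append_le) simp_all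
  finally show ?thesis .
qed

lemma abs_knorm_diff_le:
  assumes "valid_combo c" "valid_combo d"
  shows "\<bar>knorm K c - knorm K d\<bar> \<le> knorm K (combo_diff c d)"
  using knorm_le_combo_diff[OF assms] knorm_le_combo_diff[OF assms(2,1)]
    knorm_combo_diff_commute[of c d] by linarith

lemma knorm_combo_diff_combo_diff_le:
  assumes "valid_combo a" "valid_combo b" "valid_combo c" "valid_combo d"
  shows "knorm K (combo_diff (combo_diff a b) (combo_diff c d))
    \<le> knorm K (combo_diff a c) + knorm K (combo_diff b d)"
proof -
  have "knorm K (combo_diff (combo_diff a b) (combo_diff c d))
      = knorm K (combo_diff a c @ combo_scale (-1) (combo_diff b d))"
    by (rule knorm_eqI) (simp add: combo_diff_eq kinner_append_left kinner_scale_left algebra_simps)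
  also have "\<dots> \<le> knorm K (combo_diff a c) + knorm K (combo_diff b d)"
    using assms knorm_append_le[of "combo_diff a c" "combo_scale (-1) (combo_diff b d)"]
    by (simp add: knorm_scale)
  finally show ?thesis .
qed

lemma kernel_diag_bounded:
  obtains B where "B > 0" "\<And>t. t \<in> {0..1} \<Longrightarrow> sqrt (K t t) \<le> B"
proof -
  have "continuous_on {0..1} ((\<lambda>(s, t). K s t) \<circ> (\<lambda>t. (t, t)))"
    by (rule continuous_on_compose)
      (auto intro!: continuous_intros continuous_on_subset[OF continuous])
  then have "continuous_on {0..1} (\<lambda>t. K t t)"
    by (simp add: o_def)
  then obtain B where B: "B \<ge> 0" "\<And>t. t \<in> {0..1} \<Longrightarrow> norm (K t t) \<le> B"
    using continuous_on_compact_bound[OF compact_Icc] by blast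
  show ?thesis
  proof
    show "sqrt B + 1 > 0"
      using B(1) by (simp add: add_nonneg_pos)
    show "sqrt (K t t) \<le> sqrt B + 1" if "t \<in> {0..1}" for t
    proof -
      have "sqrt (K t t) \<le> sqrt B"
        using B(2)[OF that] by (intro real_sqrt_le_mono) (simp add: abs_le_iff)
      then show ?thesis by linarith
    qed
  qed
qed

lemma abs_combo_fun_le:
  assumes "valid_combo c" "t \<in> {0..1}"
  shows "\<bar>combo_fun K c t\<bar> \<le> knorm K c * sqrt (K t t)"
proof -
  have "knorm K [(1, t)] = sqrt (K t t)"
    by (simp add: knorm_def kinner_def)
  then show ?thesis
    using abs_kinner_le_knorm[of c "[(1, t)]"] assms by (simp add: combo_fun_eq_kinner)
qed

lemma continuous_on_combo_fun: "valid_combo c \<Longrightarrow> continuous_on {0..1} (combo_fun K c)"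
proof (induct c)
  case (Cons p c)
  obtain a s where p: "p = (a, s)" by (cases p)
  with Cons.prems have "continuous_on {0..1} ((\<lambda>(s, t). K s t) \<circ> (\<lambda>t. (s, t)))"
    by (intro continuous_on_compose)
      (auto intro!: continuous_intros continuous_on_subset[OF continuous])
  with Cons p show ?case
    by (auto simp: o_def intro!: continuous_intros)
qed simp

section \<open>The approximation scheme defining H(K)\<close>

lemma uniformly_Cauchy_combo_fun:
  assumes valid: "\<And>n. valid_combo (c n)" and "combo_Cauchy K c"
  shows "\<forall>e>0. \<exists>N. \<forall>m n t. N \<le> m \<and> N \<le> n \<and> t \<in> {0..1} \<longrightarrow>
           dist (combo_fun K (c m) t) (combo_fun K (c n) t) < e"
proof (intro allI impI)
  fix e :: real
  assume "e > 0"
  obtain B where B: "B > 0" "\<And>t. t \<in> {0..1} \<Longrightarrow> sqrt (K t t) \<le> B"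
    using kernel_diag_bounded by blast
  obtain N where N: "\<And>m n. m \<ge> N \<Longrightarrow> n \<ge> N \<Longrightarrow> knorm K (combo_diff (c m) (c n)) < e / B"
    using \<open>combo_Cauchy K c\<close> \<open>e > 0\<close> B(1) unfolding combo_Cauchy_def by (meson divide_pos_pos)
  have "dist (combo_fun K (c m) t) (combo_fun K (c n) t) < e"
    if "N \<le> m" "N \<le> n" "t \<in> {0..1}" for m n t
  proof -
    have "dist (combo_fun K (c m) t) (combo_fun K (c n) t) = \<bar>combo_fun K (combo_diff (c m) (c n)) t\<bar>"
      by (simp add: dist_real_def combo_fun_combo_diff)
    also have "\<dots> \<le> knorm K (combo_diff (c m) (c n)) * sqrt (K t t)"
      using valid that(3) by (intro abs_combo_fun_le) simp_all
    also have "\<dots> \<le> knorm K (combo_diff (c m) (c n)) * B"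
      using valid B(2)[OF that(3)] by (intro mult_left_mono knorm_nonneg) simp_all
    also have "\<dots> < e / B * B"
      using N[OF that(1,2)] B(1) by (intro mult_strict_right_mono)
    finally show ?thesis
      using B(1) by simp
  qed
  then show "\<exists>N. \<forall>m n t. N \<le> m \<and> N \<le> n \<and> t \<in> {0..1} \<longrightarrow>
      dist (combo_fun K (c m) t) (combo_fun K (c n) t) < e"
    by blast
qed

lemma rkhs_approx_uniform_limit:
  assumes "rkhs_approx K c f"
  shows "uniform_limit {0..1} (\<lambda>n. combo_fun K (c n)) f sequentially"
proof -
  have "\<And>n. valid_combo (c n)" "combo_Cauchy K c"
    using assms by (simp_all add: rkhs_approx_iff)
  note uniformly_Cauchy = uniformly_Cauchy_combo_fun[OF this]
  have "\<forall>t. t \<in> {0..1} \<longrightarrow> (\<forall>e>0. \<exists>N. \<forall>n. N \<le> n \<longrightarrow> dist (combo_fun K (c n) t) (f t) < e)"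
    using assms unfolding rkhs_approx_def lim_sequentially by blast
  from uniformly_cauchy_imp_uniformly_convergent[OF uniformly_Cauchy this] show ?thesis
    unfolding uniform_limit_sequentially_iff by blast
qed

lemma continuous_on_rkhs_approx:
  assumes "rkhs_approx K c f"
  shows "continuous_on {0..1} f"
proof (rule uniform_limit_theorem[OF _ rkhs_approx_uniform_limit[OF assms]])
  show "\<forall>\<^sub>F n in sequentially. continuous_on {0..1} (combo_fun K (c n))"
    using assms by (simp add: rkhs_approx_def continuous_on_combo_fun)
qed simp

lemma convergent_knorm:
  assumes valid: "\<And>n. valid_combo (c n)" and "combo_Cauchy K c"
  shows "convergent (\<lambda>n. knorm K (c n))"
proof -
  have "Cauchy (\<lambda>n. knorm K (c n))"
  proof (rule CauchyI)
    fix e :: real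
    assume "e > 0"
    then obtain N where N: "\<And>m n. m \<ge> N \<Longrightarrow> n \<ge> N \<Longrightarrow> knorm K (combo_diff (c m) (c n)) < e"
      using \<open>combo_Cauchy K c\<close> unfolding combo_Cauchy_def by meson
    have "norm (knorm K (c m) - knorm K (c n)) < e" if "m \<ge> N" "n \<ge> N" for m n
      using abs_knorm_diff_le[OF valid valid, of m n] N[OF that] by simp
    then show "\<exists>M. \<forall>m\<ge>M. \<forall>n\<ge>M. norm (knorm K (c m) - knorm K (c n)) < e"
      by blast
  qed
  then show ?thesis
    by (simp add: Cauchy_convergent_iff)
qed

lemma rkhs_approx_combo_diff:
  assumes c: "rkhs_approx K c f" and d: "rkhs_approx K d g"
  shows "rkhs_approx K (\<lambda>n. combo_diff (c n) (d n)) (\<lambda>t. f t - g t)"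
  unfolding rkhs_approx_iff
proof (intro conjI allI ballI)
  have valid: "\<And>n. valid_combo (c n)" "\<And>n. valid_combo (d n)"
    using c d by (auto simp: rkhs_approx_def)
  then show "valid_combo (combo_diff (c n) (d n))" for n
    by simp
  show "(\<lambda>n. combo_fun K (combo_diff (c n) (d n)) t) \<longlonglongrightarrow> f t - g t" if "t \<in> {0..1}" for t
    using c d that by (simp add: rkhs_approx_def combo_fun_combo_diff tendsto_diff)
  show "combo_Cauchy K (\<lambda>n. combo_diff (c n) (d n))"
    unfolding combo_Cauchy_def
  proof (intro allI impI)
    fix e :: real
    assume "e > 0"
    then obtain N1 N2 where
      N1: "\<And>m n. m \<ge> N1 \<Longrightarrow> n \<ge> N1 \<Longrightarrow> knorm K (combo_diff (c m) (c n)) < e / 2" and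
      N2: "\<And>m n. m \<ge> N2 \<Longrightarrow> n \<ge> N2 \<Longrightarrow> knorm K (combo_diff (d m) (d n)) < e / 2"
      using c d unfolding rkhs_approx_def by (meson half_gt_zero)
    have "knorm K (combo_diff (combo_diff (c m) (d m)) (combo_diff (c n) (d n))) < e"
      if "m \<ge> max N1 N2" "n \<ge> max N1 N2" for m n
      using knorm_combo_diff_combo_diff_le[OF valid(1) valid(2) valid(1) valid(2), of m m n n]
        N1[of m n] N2[of m n] that by simp
    then show "\<exists>N. \<forall>m\<ge>N. \<forall>n\<ge>N.
        knorm K (combo_diff (combo_diff (c m) (d m)) (combo_diff (c n) (d n))) < e"
      by blast
  qed
qed

lemma knorm_power2_le_kinner_combo_diff:
  assumes "valid_combo c" "valid_combo d" "knorm K c \<le> R"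
  shows "(knorm K c)^2 \<le> R * knorm K (combo_diff c d) + \<bar>kinner K c d\<bar>"
proof -
  have "(knorm K c)^2 = kinner K c (combo_diff c d) + kinner K c d"
    using assms(1) by (simp add: knorm_power2 combo_diff_eq kinner_append_right kinner_scale_right)
  also have "\<dots> \<le> knorm K c * knorm K (combo_diff c d) + \<bar>kinner K c d\<bar>"
    using abs_kinner_le_knorm[of c "combo_diff c d"] assms(1,2) by simp
  also have "\<dots> \<le> R * knorm K (combo_diff c d) + \<bar>kinner K c d\<bar>"
    using assms by (simp add: mult_right_mono knorm_nonneg)
  finally show ?thesis .
qed

lemma kinner_tendsto_zero_if_pointwise_zero:
  assumes "valid_combo c"
    and pointwise: "\<And>t. t \<in> {0..1} \<Longrightarrow> (\<lambda>n. combo_fun K (e n) t) \<longlonglongrightarrow> 0"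
  shows "(\<lambda>n. kinner K c (e n)) \<longlonglongrightarrow> 0"
proof -
  have "(\<lambda>n. b * combo_fun K (e n) r) \<longlonglongrightarrow> 0" if "(b, r) \<in> set c" for b r
    using assms(1) that by (intro tendsto_mult_right_zero pointwise) (auto simp: valid_combo_def)
  then have "(\<lambda>n. \<Sum>(b, r)\<leftarrow>c. b * combo_fun K (e n) r) \<longlonglongrightarrow> (\<Sum>_\<leftarrow>c. 0)"
    by (intro tendsto_sum_list[where f = "\<lambda>n (b, r). b * combo_fun K (e n) r"]) auto
  moreover have "kinner K c (e n) = (\<Sum>(b, r)\<leftarrow>c. b * combo_fun K (e n) r)" for n
    by (subst kinner_sym) (rule kinner_eq_sum_combo_fun)
  ultimately show ?thesis
    by simp
qed

text \<open>This is what makes rkhs_norm well defined.\<close>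

lemma rkhs_approx_zero_imp_knorm_tendsto_zero:
  assumes "rkhs_approx K e (\<lambda>t. 0)"
  shows "(\<lambda>n. knorm K (e n)) \<longlonglongrightarrow> 0"
proof (rule LIMSEQ_I)
  fix r :: real
  assume "r > 0"
  have valid: "\<And>n. valid_combo (e n)" and Cauchy: "combo_Cauchy K e"
    and pointwise: "\<And>t. t \<in> {0..1} \<Longrightarrow> (\<lambda>n. combo_fun K (e n) t) \<longlonglongrightarrow> 0"
    using assms by (auto simp: rkhs_approx_iff)
  obtain R where R: "R > 0" "\<And>n. knorm K (e n) \<le> R"
    using convergent_imp_Bseq[OF convergent_knorm[OF valid Cauchy]]
    by (elim BseqE) (metis abs_le_D1 real_norm_def)
  with \<open>r > 0\<close> obtain N where N:
    "\<And>m n. m \<ge> N \<Longrightarrow> n \<ge> N \<Longrightarrow> knorm K (combo_diff (e n) (e m)) < r^2 / (2 * R)"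
    using Cauchy unfolding combo_Cauchy_def
    by (metis divide_pos_pos zero_less_mult_iff zero_less_numeral zero_less_power)
  \<comment> \<open>Let m tend to infinity in the bound on (knorm K (e n))^2 through e m.\<close>
  have "knorm K (e n) < r" if "n \<ge> N" for n
  proof -
    have "\<forall>m\<ge>N. (knorm K (e n))^2 \<le> R * (r^2 / (2 * R)) + \<bar>kinner K (e n) (e m)\<bar>"
      using knorm_power2_le_kinner_combo_diff[OF valid valid R(2)] N[OF _ that] R(1)
      by (smt (verit) mult_strict_left_mono)
    moreover have "(\<lambda>m. R * (r^2 / (2 * R)) + \<bar>kinner K (e n) (e m)\<bar>) \<longlonglongrightarrow> R * (r^2 / (2 * R)) + \<bar>0\<bar>"
      by (intro tendsto_intros kinner_tendsto_zero_if_pointwise_zero valid pointwise)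
    ultimately have "(knorm K (e n))^2 \<le> R * (r^2 / (2 * R)) + \<bar>0\<bar>"
      by (intro LIMSEQ_le_const) blast+
    also have "\<dots> < r^2"
      using R(1) \<open>r > 0\<close> by simp
    finally show ?thesis
      by (rule power_less_imp_less_base) (use \<open>r > 0\<close> in simp)
  qed
  then show "\<exists>N. \<forall>n\<ge>N. norm (knorm K (e n) - 0) < r"
    using valid by (auto simp: knorm_nonneg intro!: exI[of _ N])
qed

lemma rkhs_approx_tendsto_rkhs_norm:
  assumes c: "rkhs_approx K c f"
  shows "(\<lambda>n. knorm K (c n)) \<longlonglongrightarrow> rkhs_norm K f"
proof -
  have "convergent (\<lambda>n. knorm K (c n))"
    using c by (simp add: rkhs_approx_iff convergent_knorm)
  then obtain r where r: "(\<lambda>n. knorm K (c n)) \<longlonglongrightarrow> r"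
    by (auto simp: convergent_def)
  have same_limit: "(\<lambda>n. knorm K (d n)) \<longlonglongrightarrow> r" if d: "rkhs_approx K d f" for d
  proof -
    have "rkhs_approx K (\<lambda>n. combo_diff (d n) (c n)) (\<lambda>t. 0)"
      using rkhs_approx_combo_diff[OF d c] by simp
    then have "(\<lambda>n. knorm K (combo_diff (d n) (c n))) \<longlonglongrightarrow> 0"
      by (rule rkhs_approx_zero_imp_knorm_tendsto_zero)
    moreover have "\<forall>n. norm (knorm K (d n) - knorm K (c n)) \<le> knorm K (combo_diff (d n) (c n))"
      using c d by (simp add: rkhs_approx_def abs_knorm_diff_le)
    ultimately have "(\<lambda>n. knorm K (d n) - knorm K (c n)) \<longlonglongrightarrow> 0"
      by (rule Lim_null_comparison[OF always_eventually, rotated])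
    from tendsto_add[OF this r] show ?thesis
      by simp
  qed
  have "rkhs_norm K f = r"
    unfolding rkhs_norm_def
  proof (rule the_equality)
    show "\<forall>d. rkhs_approx K d f \<longrightarrow> (\<lambda>n. knorm K (d n)) \<longlonglongrightarrow> r"
      using same_limit by blast
    show "r' = r" if "\<forall>d. rkhs_approx K d f \<longrightarrow> (\<lambda>n. knorm K (d n)) \<longlonglongrightarrow> r'" for r'
      using that c by (blast intro: LIMSEQ_unique[OF _ r])
  qed
  with r show ?thesis
    by simp
qed

lemma rkhs_approx_const_combo:
  assumes "valid_combo c"
  shows "rkhs_approx K (\<lambda>n. c) (combo_elem K c)"
proof -
  have "knorm K (combo_diff c c) = knorm K []"
    by (rule knorm_eqI) (simp add: combo_diff_eq kinner_append_left kinner_scale_left)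
  then have "knorm K (combo_diff c c) = 0"
    by (simp add: knorm_def)
  with assms show ?thesis
    unfolding rkhs_approx_def combo_elem_def by simp
qed

lemma combo_elem_in_rkhs:
  assumes "valid_combo c"
  shows "combo_elem K c \<in> rkhs K"
proof -
  have "\<forall>t. t \<notin> {0..1} \<longrightarrow> combo_elem K c t = 0"
    by (simp add: combo_elem_def)
  with rkhs_approx_const_combo[OF assms] show ?thesis
    unfolding rkhs_def by blast
qed

lemma rkhs_norm_combo_elem: "valid_combo c \<Longrightarrow> rkhs_norm K (combo_elem K c) = knorm K c"
  using rkhs_approx_tendsto_rkhs_norm[OF rkhs_approx_const_combo] by (simp add: LIMSEQ_const_iff)

lemma combo_Cauchy_imp_rkhs_approx:
  assumes valid: "\<And>n. valid_combo (c n)" and Cauchy: "combo_Cauchy K c"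
  obtains f where "f \<in> rkhs K" "rkhs_approx K c f"
proof -
  define f where "f t = (if t \<in> {0..1} then lim (\<lambda>n. combo_fun K (c n) t) else 0)" for t
  have "(\<lambda>n. combo_fun K (c n) t) \<longlonglongrightarrow> f t" if t: "t \<in> {0..1}" for t
  proof -
    have "Cauchy (\<lambda>n. combo_fun K (c n) t)"
    proof (rule metric_CauchyI)
      fix e :: real
      assume "e > 0"
      then obtain N where "\<forall>m n s. N \<le> m \<and> N \<le> n \<and> s \<in> {0..1} \<longrightarrow>
          dist (combo_fun K (c m) s) (combo_fun K (c n) s) < e"
        using uniformly_Cauchy_combo_fun[OF valid Cauchy] by blast
      with t show "\<exists>M. \<forall>m\<ge>M. \<forall>n\<ge>M. dist (combo_fun K (c m) t) (combo_fun K (c n) t) < e"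
        by blast
    qed
    then show ?thesis
      using t by (simp add: f_def Cauchy_convergent_iff convergent_LIMSEQ_iff)
  qed
  with valid Cauchy have approx: "rkhs_approx K c f"
    by (simp add: rkhs_approx_iff)
  moreover have "\<forall>t. t \<notin> {0..1} \<longrightarrow> f t = 0"
    by (simp add: f_def)
  ultimately have "f \<in> rkhs K"
    unfolding rkhs_def by blast
  with approx show ?thesis
    using that by blast
qed

lemma rkhs_approx_eq_if_knorm_diff_tendsto_zero:
  assumes c: "rkhs_approx K c f" and d: "rkhs_approx K d g"
    and "(\<lambda>n. knorm K (combo_diff (c n) (d n))) \<longlonglongrightarrow> 0" and t: "t \<in> {0..1}"
  shows "f t = g t"
proof -
  have "(\<lambda>n. knorm K (combo_diff (c n) (d n)) * sqrt (K t t)) \<longlonglongrightarrow> 0"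
    using tendsto_mult_left_zero[OF assms(3)] .
  moreover have "valid_combo (combo_diff (c n) (d n))" for n
    using c d by (simp add: rkhs_approx_def)
  then have "\<forall>n. norm (combo_fun K (combo_diff (c n) (d n)) t)
      \<le> knorm K (combo_diff (c n) (d n)) * sqrt (K t t)"
    using t by (simp add: abs_combo_fun_le)
  ultimately have "(\<lambda>n. combo_fun K (combo_diff (c n) (d n)) t) \<longlonglongrightarrow> 0"
    by (rule Lim_null_comparison[OF always_eventually, rotated])
  moreover have "(\<lambda>n. combo_fun K (combo_diff (c n) (d n)) t) \<longlonglongrightarrow> f t - g t"
    using rkhs_approx_combo_diff[OF c d] t by (simp add: rkhs_approx_def)
  ultimately have "0 = f t - g t"
    by (rule LIMSEQ_unique)
  then show ?thesis
    by simp
qed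

section \<open>The regularized objective and its minimizer\<close>

lemma L2_dist_sq_combo_elem:
  assumes "continuous_on {0..1} x" "valid_combo c"
  shows "L2_dist_sq x (combo_elem K c) = integral {0..1} (\<lambda>t. (x t - combo_fun K c t)^2)"
proof -
  have "L2_dist_sq x (combo_elem K c) = L2_dist_sq x (combo_fun K c)"
    by (rule L2_dist_sq_cong) (simp add: combo_elem_def)
  also have "\<dots> = integral {0..1} (\<lambda>t. (x t - combo_fun K c t)^2)"
    using assms by (intro L2_dist_sq_eq_integral continuous_on_combo_fun)
  finally show ?thesis .
qed

lemma rkhs_approx_tendsto_L2_dist_sq:
  assumes c: "rkhs_approx K c f" and x: "continuous_on {0..1} x"
  shows "(\<lambda>n. L2_dist_sq x (combo_elem K (c n))) \<longlonglongrightarrow> L2_dist_sq x f"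
proof -
  have valid: "\<And>n. valid_combo (c n)"
    using c by (simp add: rkhs_approx_def)
  have f: "continuous_on {0..1} f"
    by (rule continuous_on_rkhs_approx[OF c])
  have diff: "uniform_limit {0..1} (\<lambda>n t. x t - combo_fun K (c n) t) (\<lambda>t. x t - f t) sequentially"
    by (rule uniform_limit_minus[OF uniform_limit_const rkhs_approx_uniform_limit[OF c]])
  have bounded: "bounded ((\<lambda>t. x t - f t) ` {0..1})"
    using f x by (intro compact_imp_bounded compact_continuous_image continuous_intros compact_Icc)
  have product: "uniform_limit {0..1} (\<lambda>n t. (x t - combo_fun K (c n) t) * (x t - combo_fun K (c n) t))
      (\<lambda>t. (x t - f t) * (x t - f t)) sequentially"
    by (rule uniform_lim_mult[OF diff diff bounded bounded])
  have continuous: "continuous_on {0..1} (\<lambda>t. (x t - combo_fun K (c n) t) * (x t - combo_fun K (c n) t))"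
    for n
    using continuous_on_combo_fun[OF valid] x by (intro continuous_intros)
  obtain I J where
    I: "\<And>n. ((\<lambda>t. (x t - combo_fun K (c n) t) * (x t - combo_fun K (c n) t)) has_integral I n) {0..1}"
    and J: "((\<lambda>t. (x t - f t) * (x t - f t)) has_integral J) {0..1}" and "I \<longlonglongrightarrow> J"
    using uniform_limit_integral[OF product continuous] by auto
  moreover have "L2_dist_sq x (combo_elem K (c n)) = I n" for n
    using L2_dist_sq_combo_elem[OF x valid] I[of n] by (simp add: power2_eq_square integral_unique)
  moreover have "L2_dist_sq x f = J"
    using L2_dist_sq_eq_integral[OF x f] J by (simp add: power2_eq_square integral_unique)
  ultimately show ?thesis
    by simp
qed

lemma knorm_midpoint_power2:
  assumes "valid_combo c" "valid_combo d"
  shows "(knorm K (combo_midpoint c d))^2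
    = ((knorm K c)^2 + (knorm K d)^2) / 2 - (knorm K (combo_diff c d))^2 / 4"
  using assms
  by (simp add: knorm_power2 combo_midpoint_def combo_diff_eq kinner_append_left
      kinner_append_right kinner_scale_left kinner_scale_right kinner_sym[of d c] field_simps)

lemma L2_dist_sq_midpoint_le:
  assumes x: "continuous_on {0..1} x" and valid: "valid_combo c" "valid_combo d"
  shows "L2_dist_sq x (combo_elem K (combo_midpoint c d))
    \<le> (L2_dist_sq x (combo_elem K c) + L2_dist_sq x (combo_elem K d)) / 2"
proof -
  let ?F = "\<lambda>e t. (x t - combo_fun K e t)^2"
  have F: "(?F e has_integral integral {0..1} (?F e)) {0..1}" if "valid_combo e" for e
    using x continuous_on_combo_fun[OF that]
    by (intro integrable_integral integrable_continuous_interval continuous_intros)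
  have G: "((\<lambda>t. (?F c t + ?F d t) / 2) has_integral
      (integral {0..1} (?F c) + integral {0..1} (?F d)) / 2) {0..1}"
    by (intro has_integral_divide has_integral_add F valid)
  have F_midpoint: "(?F (combo_midpoint c d) has_integral integral {0..1} (?F (combo_midpoint c d))) {0..1}"
    using valid by (intro F) simp
  have "integral {0..1} (?F (combo_midpoint c d))
      \<le> (integral {0..1} (?F c) + integral {0..1} (?F d)) / 2"
  proof (rule has_integral_le[OF F_midpoint G])
    show "?F (combo_midpoint c d) t \<le> (?F c t + ?F d t) / 2" for t
    proof -
      have "(?F c t + ?F d t) / 2 - ?F (combo_midpoint c d) t = (combo_fun K c t - combo_fun K d t)^2 / 4"
        by (simp add: combo_fun_midpoint power2_eq_square field_simps)
      moreover have "(combo_fun K c t - combo_fun K d t)^2 / 4 \<ge> 0"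
        by simp
      ultimately show ?thesis
        by linarith
    qed
  qed
  then show ?thesis
    using valid by (simp add: L2_dist_sq_combo_elem[OF x])
qed

lemma reg_obj_combo_elem:
  "valid_combo c \<Longrightarrow> reg_obj K x \<beta> (combo_elem K c) = L2_dist_sq x (combo_elem K c) + \<beta> * (knorm K c)^2"
  by (simp add: reg_obj_def rkhs_norm_combo_elem)

lemma reg_obj_midpoint_le:
  assumes x: "continuous_on {0..1} x" and valid: "valid_combo c" "valid_combo d"
  shows "reg_obj K x \<beta> (combo_elem K (combo_midpoint c d))
    \<le> (reg_obj K x \<beta> (combo_elem K c) + reg_obj K x \<beta> (combo_elem K d)) / 2
      - \<beta> * (knorm K (combo_diff c d))^2 / 4"
proof -
  have "reg_obj K x \<beta> (combo_elem K (combo_midpoint c d))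
      = L2_dist_sq x (combo_elem K (combo_midpoint c d)) + \<beta> * (knorm K (combo_midpoint c d))^2"
    using valid by (simp add: reg_obj_combo_elem)
  moreover have "\<beta> * (knorm K (combo_midpoint c d))^2
      = (\<beta> * (knorm K c)^2 + \<beta> * (knorm K d)^2) / 2 - \<beta> * (knorm K (combo_diff c d))^2 / 4"
    by (simp add: knorm_midpoint_power2[OF valid] field_simps)
  ultimately show ?thesis
    using L2_dist_sq_midpoint_le[OF x valid] valid by (simp add: reg_obj_combo_elem field_simps)
qed

lemma rkhs_approx_tendsto_reg_obj:
  assumes c: "rkhs_approx K c f" and x: "continuous_on {0..1} x"
  shows "(\<lambda>n. reg_obj K x \<beta> (combo_elem K (c n))) \<longlonglongrightarrow> reg_obj K x \<beta> f"
proof -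
  have "(\<lambda>n. L2_dist_sq x (combo_elem K (c n)) + \<beta> * (knorm K (c n))^2) \<longlonglongrightarrow> reg_obj K x \<beta> f"
    unfolding reg_obj_def
    by (intro tendsto_intros rkhs_approx_tendsto_L2_dist_sq[OF c x] rkhs_approx_tendsto_rkhs_norm[OF c])
  moreover have "valid_combo (c n)" for n
    using c by (simp add: rkhs_approx_def)
  ultimately show ?thesis
    by (simp add: reg_obj_combo_elem)
qed

lemma exists_combo_reg_obj_less:
  assumes x: "continuous_on {0..1} x" and "g \<in> rkhs K" "reg_obj K x \<beta> g < y"
  obtains c where "valid_combo c" "reg_obj K x \<beta> (combo_elem K c) < y"
proof -
  obtain d where d: "rkhs_approx K d g"
    using \<open>g \<in> rkhs K\<close> by (auto simp: rkhs_def)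
  obtain k where "reg_obj K x \<beta> (combo_elem K (d k)) < y"
    using order_tendstoD(2)[OF rkhs_approx_tendsto_reg_obj[OF d x] \<open>reg_obj K x \<beta> g < y\<close>]
    by (auto simp: eventually_sequentially)
  with d that show ?thesis
    by (auto simp: rkhs_approx_def)
qed

text \<open>By strong convexity, the objective at the midpoint of c m and c n would drop below the
  infimum V unless knorm K (combo_diff (c m) (c n)) is small.\<close>

lemma near_minimizing_combo_Cauchy:
  assumes x: "continuous_on {0..1} x" and "\<beta> > 0"
    and lower: "\<And>c. valid_combo c \<Longrightarrow> V \<le> reg_obj K x \<beta> (combo_elem K c)"
    and valid: "\<And>n. valid_combo (c n)"
    and near: "\<And>n. reg_obj K x \<beta> (combo_elem K (c n)) < V + inverse (real (Suc n))"
  shows "combo_Cauchy K c"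
  unfolding combo_Cauchy_def
proof (intro allI impI)
  fix e :: real
  assume "e > 0"
  with \<open>\<beta> > 0\<close> obtain N where N: "inverse (real (Suc N)) < \<beta> * e^2 / 4"
    using reals_Archimedean by (metis divide_pos_pos mult_pos_pos zero_less_numeral zero_less_power)
  define \<delta> where "\<delta> = inverse (real (Suc N))"
  have near_N: "reg_obj K x \<beta> (combo_elem K (c m)) < V + \<delta>" if "N \<le> m" for m
  proof -
    have "inverse (real (Suc m)) \<le> \<delta>"
      unfolding \<delta>_def using that by (simp add: le_imp_inverse_le)
    with near[of m] show ?thesis
      by linarith
  qed
  have "knorm K (combo_diff (c m) (c n)) < e" if "N \<le> m" "N \<le> n" for m n
  proof -
    define k where "k = knorm K (combo_diff (c m) (c n))"
    have "V \<le> reg_obj K x \<beta> (combo_elem K (combo_midpoint (c m) (c n)))"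
      using valid by (intro lower) simp
    with reg_obj_midpoint_le[OF x valid[of m] valid[of n], of \<beta>, folded k_def]
      near_N[OF that(1)] near_N[OF that(2)] N[folded \<delta>_def]
    have "\<beta> * k^2 < \<beta> * e^2"
      by argo
    then have "k^2 < e^2"
      using \<open>\<beta> > 0\<close> by simp
    then show ?thesis
      unfolding k_def by (rule power_less_imp_less_base) (use \<open>e > 0\<close> in simp)
  qed
  then show "\<exists>N. \<forall>m\<ge>N. \<forall>n\<ge>N. knorm K (combo_diff (c m) (c n)) < e"
    by blast
qed

lemma reg_obj_has_minimizer:
  assumes x: "continuous_on {0..1} x" and "\<beta> > 0"
  shows "\<exists>f\<in>rkhs K. \<forall>g\<in>rkhs K. reg_obj K x \<beta> f \<le> reg_obj K x \<beta> g"
proof -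
  define V where "V = (INF g\<in>rkhs K. reg_obj K x \<beta> g)"
  have bdd: "bdd_below (reg_obj K x \<beta> ` rkhs K)"
    using reg_obj_nonneg \<open>\<beta> > 0\<close> by (intro bdd_belowI[of _ 0]) auto
  have nonempty: "rkhs K \<noteq> {}"
    using combo_elem_in_rkhs[of "[]"] by auto
  have V_le: "V \<le> reg_obj K x \<beta> g" if "g \<in> rkhs K" for g
    unfolding V_def using bdd that by (rule cINF_lower)
  have "\<exists>c. valid_combo c \<and> reg_obj K x \<beta> (combo_elem K c) < V + inverse (real (Suc n))" for n
  proof -
    obtain g where "g \<in> rkhs K" "reg_obj K x \<beta> g < V + inverse (real (Suc n))"
      using cINF_less_iff[OF nonempty bdd, of "V + inverse (real (Suc n))"] by (auto simp: V_def)
    then show ?thesis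
      using exists_combo_reg_obj_less[OF x] by metis
  qed
  then obtain c where valid: "\<And>n. valid_combo (c n)"
    and near: "\<And>n. reg_obj K x \<beta> (combo_elem K (c n)) < V + inverse (real (Suc n))"
    by metis
  have "combo_Cauchy K c"
    using x \<open>\<beta> > 0\<close> V_le[OF combo_elem_in_rkhs] valid near by (rule near_minimizing_combo_Cauchy)
  then obtain f where f: "f \<in> rkhs K" "rkhs_approx K c f"
    using combo_Cauchy_imp_rkhs_approx[of c] valid by blast
  have "(\<lambda>n. reg_obj K x \<beta> (combo_elem K (c n))) \<longlonglongrightarrow> V"
  proof (rule tendsto_sandwich)
    show "\<forall>\<^sub>F n in sequentially. V \<le> reg_obj K x \<beta> (combo_elem K (c n))"
      using V_le[OF combo_elem_in_rkhs[OF valid]] by simp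
    show "\<forall>\<^sub>F n in sequentially. reg_obj K x \<beta> (combo_elem K (c n)) \<le> V + inverse (real (Suc n))"
      using near by (simp add: less_imp_le)
    show "(\<lambda>n. V + inverse (real (Suc n))) \<longlonglongrightarrow> V"
      using tendsto_add[OF tendsto_const LIMSEQ_inverse_real_of_nat, of V] by simp
  qed simp
  then have "reg_obj K x \<beta> f = V"
    using rkhs_approx_tendsto_reg_obj[OF f(2) x] LIMSEQ_unique by blast
  with f(1) V_le show ?thesis
    by auto
qed

lemma knorm_diff_approx_minimizer_le:
  assumes x: "continuous_on {0..1} x" and "\<beta> > 0"
    and min: "\<And>h. h \<in> rkhs K \<Longrightarrow> reg_obj K x \<beta> f \<le> reg_obj K x \<beta> h"
    and c: "rkhs_approx K c f" and d: "rkhs_approx K d g"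
  shows "(knorm K (combo_diff (c n) (d n)))^2
    \<le> 4 / \<beta> * ((reg_obj K x \<beta> (combo_elem K (c n)) + reg_obj K x \<beta> (combo_elem K (d n))) / 2
                 - reg_obj K x \<beta> f)"
proof -
  have valid: "valid_combo (c n)" "valid_combo (d n)"
    using c d by (simp_all add: rkhs_approx_def)
  have "reg_obj K x \<beta> f \<le> reg_obj K x \<beta> (combo_elem K (combo_midpoint (c n) (d n)))"
    using valid by (intro min combo_elem_in_rkhs) simp
  with reg_obj_midpoint_le[OF x valid, of \<beta>] \<open>\<beta> > 0\<close> show ?thesis
    by (simp add: field_simps)
qed

lemma rkhs_approx_minimizer_bound:
  assumes x: "continuous_on {0..1} x" and "\<beta> > 0"
    and min: "\<And>h. h \<in> rkhs K \<Longrightarrow> reg_obj K x \<beta> f \<le> reg_obj K x \<beta> h"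
    and c: "rkhs_approx K c f" and d: "rkhs_approx K d g"
  obtains w where "w \<longlonglongrightarrow> 2 / \<beta> * (reg_obj K x \<beta> g - reg_obj K x \<beta> f)"
    and "\<And>n. (knorm K (combo_diff (c n) (d n)))^2 \<le> w n"
proof
  let ?w = "\<lambda>n. 4 / \<beta> * ((reg_obj K x \<beta> (combo_elem K (c n)) + reg_obj K x \<beta> (combo_elem K (d n))) / 2
                 - reg_obj K x \<beta> f)"
  have "?w \<longlonglongrightarrow> 4 / \<beta> * ((reg_obj K x \<beta> f + reg_obj K x \<beta> g) / 2 - reg_obj K x \<beta> f)"
    by (intro tendsto_intros rkhs_approx_tendsto_reg_obj c d x) simp
  moreover have "4 / \<beta> * ((reg_obj K x \<beta> f + reg_obj K x \<beta> g) / 2 - reg_obj K x \<beta> f)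
      = 2 / \<beta> * (reg_obj K x \<beta> g - reg_obj K x \<beta> f)"
    using \<open>\<beta> > 0\<close> by (simp add: field_simps)
  ultimately show "?w \<longlonglongrightarrow> 2 / \<beta> * (reg_obj K x \<beta> g - reg_obj K x \<beta> f)"
    by simp
  show "(knorm K (combo_diff (c n) (d n)))^2 \<le> ?w n" for n
    by (rule knorm_diff_approx_minimizer_le[OF x \<open>\<beta> > 0\<close> min c d])
qed

lemma rkhs_norm_diff_power2_le:
  assumes x: "continuous_on {0..1} x" and "\<beta> > 0"
    and f: "f \<in> rkhs K" and min: "\<And>h. h \<in> rkhs K \<Longrightarrow> reg_obj K x \<beta> f \<le> reg_obj K x \<beta> h"
    and g: "g \<in> rkhs K"
  shows "(rkhs_norm K f - rkhs_norm K g)^2 \<le> 2 / \<beta> * (reg_obj K x \<beta> g - reg_obj K x \<beta> f)"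
proof -
  obtain c d where c: "rkhs_approx K c f" and d: "rkhs_approx K d g"
    using f g by (auto simp: rkhs_def)
  obtain w where w: "w \<longlonglongrightarrow> 2 / \<beta> * (reg_obj K x \<beta> g - reg_obj K x \<beta> f)"
    and bound: "\<And>n. (knorm K (combo_diff (c n) (d n)))^2 \<le> w n"
    using rkhs_approx_minimizer_bound[OF x \<open>\<beta> > 0\<close> min c d] by blast
  have "(knorm K (c n) - knorm K (d n))^2 \<le> w n" for n
  proof -
    have "valid_combo (c n)" "valid_combo (d n)"
      using c d by (simp_all add: rkhs_approx_def)
    then have "(knorm K (c n) - knorm K (d n))^2 \<le> (knorm K (combo_diff (c n) (d n)))^2"
      by (simp add: abs_le_square_iff[symmetric] abs_knorm_diff_le knorm_nonneg)
    with bound[of n] show ?thesis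
      by linarith
  qed
  moreover have "(\<lambda>n. (knorm K (c n) - knorm K (d n))^2) \<longlonglongrightarrow> (rkhs_norm K f - rkhs_norm K g)^2"
    by (intro tendsto_intros rkhs_approx_tendsto_rkhs_norm c d)
  ultimately show ?thesis
    using w by (intro LIMSEQ_le) auto
qed

lemma reg_obj_minimizer_unique:
  assumes x: "continuous_on {0..1} x" and "\<beta> > 0"
    and f: "f \<in> rkhs K" and f_min: "\<And>h. h \<in> rkhs K \<Longrightarrow> reg_obj K x \<beta> f \<le> reg_obj K x \<beta> h"
    and g: "g \<in> rkhs K" and g_min: "\<And>h. h \<in> rkhs K \<Longrightarrow> reg_obj K x \<beta> g \<le> reg_obj K x \<beta> h"
  shows "f = g"
proof
  fix t :: real
  obtain c d where c: "rkhs_approx K c f" and d: "rkhs_approx K d g"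
    using f g by (auto simp: rkhs_def)
  obtain w where "w \<longlonglongrightarrow> 2 / \<beta> * (reg_obj K x \<beta> g - reg_obj K x \<beta> f)"
    and bound: "\<And>n. (knorm K (combo_diff (c n) (d n)))^2 \<le> w n"
    using rkhs_approx_minimizer_bound[OF x \<open>\<beta> > 0\<close> f_min c d] by blast
  moreover have "reg_obj K x \<beta> g = reg_obj K x \<beta> f"
    using f_min[OF g] g_min[OF f] by simp
  ultimately have w: "w \<longlonglongrightarrow> 0"
    by simp
  have "valid_combo (combo_diff (c n) (d n))" for n
    using c d by (simp add: rkhs_approx_def)
  then have "\<forall>n. norm (knorm K (combo_diff (c n) (d n))) \<le> sqrt (w n)"
    using bound by (simp add: knorm_nonneg real_le_rsqrt)
  moreover have "(\<lambda>n. sqrt (w n)) \<longlonglongrightarrow> 0"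
    using tendsto_real_sqrt[OF w] by simp
  ultimately have knorm_diff: "(\<lambda>n. knorm K (combo_diff (c n) (d n))) \<longlonglongrightarrow> 0"
    by (rule Lim_null_comparison[OF always_eventually])
  show "f t = g t"
  proof (cases "t \<in> {0..1}")
    case True
    then show ?thesis
      by (rule rkhs_approx_eq_if_knorm_diff_tendsto_zero[OF c d knorm_diff])
  next
    case False
    with f g show ?thesis
      by (simp add: rkhs_def)
  qed
qed

lemma reg_fit_minimizes:
  assumes "continuous_on {0..1} x" "\<beta> > 0"
  shows "reg_fit K x \<beta> \<in> rkhs K" and "\<And>g. g \<in> rkhs K \<Longrightarrow> reg_obj K x \<beta> (reg_fit K x \<beta>) \<le> reg_obj K x \<beta> g"
proof -
  have "\<exists>!f. f \<in> rkhs K \<and> (\<forall>g\<in>rkhs K. reg_obj K x \<beta> f \<le> reg_obj K x \<beta> g)"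
    using reg_obj_has_minimizer[OF assms] reg_obj_minimizer_unique[OF assms] by blast
  then have "reg_fit K x \<beta> \<in> rkhs K \<and> (\<forall>g\<in>rkhs K. reg_obj K x \<beta> (reg_fit K x \<beta>) \<le> reg_obj K x \<beta> g)"
    unfolding reg_fit_def reg_obj_def by (rule theI')
  then show "reg_fit K x \<beta> \<in> rkhs K" "\<And>g. g \<in> rkhs K \<Longrightarrow> reg_obj K x \<beta> (reg_fit K x \<beta>) \<le> reg_obj K x \<beta> g"
    by auto
qed

section \<open>Dependence of the fit on the regularization parameter\<close>

lemma reg_fit_rkhs_norm_power2_le:
  assumes x: "continuous_on {0..1} x" and "\<beta> > 0"
  shows "\<beta> * (rkhs_norm K (reg_fit K x \<beta>))^2 \<le> L2_dist_sq x (\<lambda>t. 0)"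
proof -
  have "reg_obj K x \<beta> (reg_fit K x \<beta>) \<le> reg_obj K x \<beta> (combo_elem K [])"
    by (intro reg_fit_minimizes[OF x \<open>\<beta> > 0\<close>] combo_elem_in_rkhs) simp
  moreover have "rkhs_norm K (\<lambda>t. 0) = 0"
    using rkhs_norm_combo_elem[of "[]"] by (simp add: knorm_def)
  ultimately show ?thesis
    using L2_dist_sq_nonneg[of x "reg_fit K x \<beta>"] by (simp add: reg_obj_def)
qed

text \<open>The objectives for \<alpha> and \<gamma> differ only in the weight of the squared norm, so
  comparing each at the other's minimizer bounds the excess objective of the \<gamma>-fit.\<close>

lemma reg_fit_rkhs_norm_diff_power2_le:
  assumes x: "continuous_on {0..1} x" and "\<alpha> > 0" "\<gamma> > 0"
  shows "(rkhs_norm K (reg_fit K x \<alpha>) - rkhs_norm K (reg_fit K x \<gamma>))^2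
    \<le> 2 / \<alpha> * (\<bar>\<gamma> - \<alpha>\<bar> * ((rkhs_norm K (reg_fit K x \<alpha>))^2 + (rkhs_norm K (reg_fit K x \<gamma>))^2))"
proof -
  define f g where "f = reg_fit K x \<alpha>" and "g = reg_fit K x \<gamma>"
  define P Q where "P = (rkhs_norm K f)^2" and "Q = (rkhs_norm K g)^2"
  have "reg_obj K x \<gamma> g \<le> reg_obj K x \<gamma> f"
    unfolding f_def g_def by (intro reg_fit_minimizes x \<open>\<alpha> > 0\<close> \<open>\<gamma> > 0\<close>)
  then have "reg_obj K x \<alpha> g - reg_obj K x \<alpha> f \<le> (\<gamma> - \<alpha>) * (P - Q)"
    by (simp add: reg_obj_def P_def Q_def algebra_simps)
  also have "\<dots> \<le> \<bar>\<gamma> - \<alpha>\<bar> * \<bar>P - Q\<bar>"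
    by (metis abs_ge_self abs_mult)
  also have "\<dots> \<le> \<bar>\<gamma> - \<alpha>\<bar> * (P + Q)"
    by (intro mult_left_mono) (simp_all add: P_def Q_def abs_le_iff)
  finally have "2 / \<alpha> * (reg_obj K x \<alpha> g - reg_obj K x \<alpha> f) \<le> 2 / \<alpha> * (\<bar>\<gamma> - \<alpha>\<bar> * (P + Q))"
    using \<open>\<alpha> > 0\<close> by (intro mult_left_mono) simp_all
  moreover have "(rkhs_norm K f - rkhs_norm K g)^2 \<le> 2 / \<alpha> * (reg_obj K x \<alpha> g - reg_obj K x \<alpha> f)"
    unfolding f_def g_def
    by (intro rkhs_norm_diff_power2_le reg_fit_minimizes x \<open>\<alpha> > 0\<close> \<open>\<gamma> > 0\<close>)
  ultimately show ?thesis
    by (simp add: f_def g_def P_def Q_def)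
qed

lemma tendsto_rkhs_norm_reg_fit:
  assumes x: "continuous_on {0..1} x" and pos: "\<And>j. \<alpha>s j > 0" and "\<alpha>s \<longlonglongrightarrow> \<alpha>" "\<alpha> > 0"
  shows "(\<lambda>j. rkhs_norm K (reg_fit K x (\<alpha>s j))) \<longlonglongrightarrow> rkhs_norm K (reg_fit K x \<alpha>)"
proof -
  define N where "N \<beta> = rkhs_norm K (reg_fit K x \<beta>)" for \<beta>
  define C where "C = L2_dist_sq x (\<lambda>t. 0)"
  define w where "w j = 2 / \<alpha> * (\<bar>\<alpha>s j - \<alpha>\<bar> * ((N \<alpha>)^2 + C / \<alpha>s j))" for j
  have "w \<longlonglongrightarrow> 2 / \<alpha> * (\<bar>\<alpha> - \<alpha>\<bar> * ((N \<alpha>)^2 + C / \<alpha>))"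
    unfolding w_def using \<open>\<alpha>s \<longlonglongrightarrow> \<alpha>\<close> \<open>\<alpha> > 0\<close> by (intro tendsto_intros) auto
  then have "(\<lambda>j. sqrt (w j)) \<longlonglongrightarrow> 0"
    using tendsto_real_sqrt by fastforce
  moreover have "\<forall>j. norm (N (\<alpha>s j) - N \<alpha>) \<le> sqrt (w j)"
  proof
    fix j
    have "(N (\<alpha>s j))^2 \<le> C / \<alpha>s j"
      using reg_fit_rkhs_norm_power2_le[OF x pos[of j]] pos[of j]
      by (simp add: N_def C_def field_simps)
    then have "(N \<alpha> - N (\<alpha>s j))^2 \<le> w j"
      using reg_fit_rkhs_norm_diff_power2_le[OF x \<open>\<alpha> > 0\<close> pos[of j]] \<open>\<alpha> > 0\<close>
      unfolding w_def N_def
      by (smt (verit, best) abs_ge_zero divide_nonneg_pos mult_left_mono)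
    then show "norm (N (\<alpha>s j) - N \<alpha>) \<le> sqrt (w j)"
      using real_sqrt_le_mono by fastforce
  qed
  ultimately have "(\<lambda>j. N (\<alpha>s j) - N \<alpha>) \<longlonglongrightarrow> 0"
    by (rule Lim_null_comparison[OF always_eventually, rotated])
  then show ?thesis
    unfolding N_def by (rule LIM_zero_cancel)
qed

end

section \<open>Covariance kernels\<close>

lemma has_bochner_integral_sum_list:
  fixes f :: "'b \<Rightarrow> 'a \<Rightarrow> real"
  assumes "\<And>x. x \<in> set xs \<Longrightarrow> has_bochner_integral M (f x) (I x)"
  shows "has_bochner_integral M (\<lambda>\<omega>. \<Sum>x\<leftarrow>xs. f x \<omega>) (\<Sum>x\<leftarrow>xs. I x)"
  using assms by (induct xs) auto

lemma integrable_mult_if_square_integrable: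
  fixes f g :: "'a \<Rightarrow> real"
  assumes "f \<in> borel_measurable M" "g \<in> borel_measurable M"
    and "integrable M (\<lambda>\<omega>. (f \<omega>)^2)" "integrable M (\<lambda>\<omega>. (g \<omega>)^2)"
  shows "integrable M (\<lambda>\<omega>. f \<omega> * g \<omega>)"
proof (rule Bochner_Integration.integrable_bound)
  show "integrable M (\<lambda>\<omega>. (f \<omega>)^2 + (g \<omega>)^2)"
    using assms(3,4) by (rule Bochner_Integration.integrable_add)
  show "(\<lambda>\<omega>. f \<omega> * g \<omega>) \<in> borel_measurable M"
    using assms(1,2) by measurable
  have "\<bar>a * b\<bar> \<le> a^2 + b^2" for a b :: real
  proof -
    have "2 * (\<bar>a\<bar> * \<bar>b\<bar>) \<le> a^2 + b^2"
      using sum_squares_bound[of "\<bar>a\<bar>" "\<bar>b\<bar>"] by simp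
    moreover have "0 \<le> \<bar>a\<bar> * \<bar>b\<bar>"
      by simp
    ultimately show ?thesis
      unfolding abs_mult by linarith
  qed
  then show "AE \<omega> in M. norm (f \<omega> * g \<omega>) \<le> norm ((f \<omega>)^2 + (g \<omega>)^2)"
    by simp
qed

lemma kinner_second_moment_kernel:
  fixes Y :: "real \<Rightarrow> 'a \<Rightarrow> real"
  assumes meas: "\<And>s. s \<in> {0..1} \<Longrightarrow> Y s \<in> borel_measurable M"
    and square: "\<And>s. s \<in> {0..1} \<Longrightarrow> integrable M (\<lambda>\<omega>. (Y s \<omega>)^2)"
    and "valid_combo c"
  shows "kinner (\<lambda>s r. \<integral>\<omega>. Y s \<omega> * Y r \<omega> \<partial>M) c c = (\<integral>\<omega>. (\<Sum>(a, s)\<leftarrow>c. a * Y s \<omega>)^2 \<partial>M)"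
proof -
  have product: "has_bochner_integral M (\<lambda>\<omega>. Y s \<omega> * Y r \<omega>) (\<integral>\<omega>. Y s \<omega> * Y r \<omega> \<partial>M)"
    if "s \<in> {0..1}" "r \<in> {0..1}" for s r
    using that by (intro has_bochner_integral_integrable integrable_mult_if_square_integrable meas square)
  have point: "snd p \<in> {0..1}" if "p \<in> set c" for p
    using \<open>valid_combo c\<close> that by (auto simp: valid_combo_def)
  have "has_bochner_integral M
      (\<lambda>\<omega>. \<Sum>p\<leftarrow>c. \<Sum>q\<leftarrow>c. fst p * fst q * (Y (snd p) \<omega> * Y (snd q) \<omega>))
      (\<Sum>p\<leftarrow>c. \<Sum>q\<leftarrow>c. fst p * fst q * (\<integral>\<omega>. Y (snd p) \<omega> * Y (snd q) \<omega> \<partial>M))"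
    by (intro has_bochner_integral_sum_list has_bochner_integral_mult_right product point)
  moreover have "(\<Sum>p\<leftarrow>c. \<Sum>q\<leftarrow>c. fst p * fst q * (Y (snd p) \<omega> * Y (snd q) \<omega>))
      = (\<Sum>(a, s)\<leftarrow>c. a * Y s \<omega>)^2" for \<omega>
    by (simp add: power2_eq_square split_def sum_list_const_mult[symmetric]
        sum_list_mult_const[symmetric] algebra_simps)
  ultimately show ?thesis
    by (simp add: kinner_def split_def has_bochner_integral_iff)
qed

lemma kinner_second_moment_kernel_nonneg:
  fixes Y :: "real \<Rightarrow> 'a \<Rightarrow> real"
  assumes "\<And>s. s \<in> {0..1} \<Longrightarrow> Y s \<in> borel_measurable M"
    and "\<And>s. s \<in> {0..1} \<Longrightarrow> integrable M (\<lambda>\<omega>. (Y s \<omega>)^2)"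
    and "valid_combo c"
  shows "kinner (\<lambda>s r. \<integral>\<omega>. Y s \<omega> * Y r \<omega> \<partial>M) c c \<ge> 0"
proof -
  have "0 \<le> (\<integral>\<omega>. (\<Sum>(a, s)\<leftarrow>c. a * Y s \<omega>)^2 \<partial>M)"
    by (rule integral_nonneg_AE) simp
  then show ?thesis
    using kinner_second_moment_kernel[OF assms] by simp
qed

lemma (in finite_measure) integrable_square_diff_const:
  fixes f :: "'a \<Rightarrow> real"
  assumes "f \<in> borel_measurable M" "integrable M (\<lambda>\<omega>. (f \<omega>)^2)"
  shows "integrable M (\<lambda>\<omega>. (f \<omega> - c)^2)"
proof -
  have "integrable M (\<lambda>\<omega>. (f \<omega>)^2 - 2 * c * f \<omega> + c^2)"
    using assms square_integrable_imp_integrable[OF assms] by auto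
  then show ?thesis
    by (simp add: power2_diff algebra_simps)
qed

theorem proposition3:
  fixes M :: "'w measure" and X :: "'w \<Rightarrow> real \<Rightarrow> real"
    and m :: "real \<Rightarrow> real" and K :: "real \<Rightarrow> real \<Rightarrow> real"
    and \<alpha>s :: "nat \<Rightarrow> real" and \<alpha> :: real
  assumes "prob_space M"
    and meas: "\<And>t. t \<in> {0..1} \<Longrightarrow> (\<lambda>\<omega>. X \<omega> t) \<in> borel_measurable M"
    and second_order: "\<And>t. t \<in> {0..1} \<Longrightarrow> integrable M (\<lambda>\<omega>. (X \<omega> t)\<^sup>2)"
    and traj_cont: "\<And>\<omega>. \<omega> \<in> space M \<Longrightarrow> continuous_on {0..1} (X \<omega>)"
    and mean_def: "m = (\<lambda>t. \<integral>\<omega>. X \<omega> t \<partial>M)"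
    and cov_def: "K = (\<lambda>s t. \<integral>\<omega>. (X \<omega> s - m s) * (X \<omega> t - m t) \<partial>M)"
    and mean_cont: "continuous_on {0..1} m"
    and cov_cont: "continuous_on ({0..1} \<times> {0..1}) (\<lambda>(s, t). K s t)"
    and pd: "pos_def_kernel K"
    and pos: "\<And>j. \<alpha>s j > 0"
    and lim: "\<alpha>s \<longlonglongrightarrow> \<alpha>" and "\<alpha> > 0"
  shows "AE \<omega> in M. (\<lambda>j. rkhs_norm K (reg_fit K (X \<omega>) (\<alpha>s j)))
                       \<longlonglongrightarrow> rkhs_norm K (reg_fit K (X \<omega>) \<alpha>)"
proof -
  interpret prob_space M by fact
  have "kinner K c c \<ge> 0" if "valid_combo c" for c
    unfolding cov_def using meas second_order that
    by (intro kinner_second_moment_kernel_nonneg integrable_square_diff_const) auto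
  then interpret continuous_psd_kernel K
    using cov_cont by unfold_locales (auto simp: cov_def mult.commute)
  show ?thesis
    using traj_cont by (intro AE_I2 tendsto_rkhs_norm_reg_fit pos lim \<open>\<alpha> > 0\<close>)
qed

end
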